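(* Let $M(i)$ be a maximal matching of $G(i)$, let $V_{cover}(i)$ be the set of endpoints of edges of $M(i)$, let $j\ge i$, and let $V'=V_{cover}(i\rightarrow j)$. Let $G'$ be the subgraph of $G(j)$ consisting of all edges of $G(j)$ between vertices of $V'$, together with, for each vertex $u\in V'$, up to $|V'|+1$ arbitrary edges of $G(j)$ from $u$ to vertices in $V\setminus V'$ (all such edges if there are fewer). Then for any maximal matching $M'$ of $G'$, the set of endpoints of edges of $M'$ is a vertex cover of $G(j)$ whose size is at most twice the size of a minimum vertex cover of $G(j)$.
   Context: A graph on vertex set $V$ undergoes a sequence of updates numbered $1,2,\dots$, each inserting or deleting one edge; $G(i)$ is the graph after the $i$-th update. A matching is maximal if no edge of the graph has both endpoints unmatched. $V_{cover}(i\rightarrow j)$ is obtained from $V_{cover}(i)$ by adding all endpoints of edges inserted during updates $i+1,\dots,j$; it is a vertex cover of $G(j)$. *)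

theory Defs
  imports Main
begin

definition is_edge :: "'a set \<Rightarrow> 'a set \<Rightarrow> bool" where
  "is_edge V e \<longleftrightarrow> e \<subseteq> V \<and> card e = 2"

definition is_graph :: "'a set \<Rightarrow> 'a set set \<Rightarrow> bool" where
  "is_graph V E \<longleftrightarrow> (\<forall>e\<in>E. is_edge V e)"

datatype 'a update = Ins "'a set" | Del "'a set"

fun apply_update :: "'a update \<Rightarrow> 'a set set \<Rightarrow> 'a set set" where
  "apply_update (Ins e) E = insert e E"
| "apply_update (Del e) E = E - {e}"

text \<open>G0 is the initial graph, ups k is the k-th update (k \<ge> 1); graph_at G0 ups i = G(i).\<close>
fun graph_at :: "'a set set \<Rightarrow> (nat \<Rightarrow> 'a update) \<Rightarrow> nat \<Rightarrow> 'a set set" where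
  "graph_at G0 ups 0 = G0"
| "graph_at G0 ups (Suc i) = apply_update (ups (Suc i)) (graph_at G0 ups i)"

definition valid_updates :: "'a set \<Rightarrow> (nat \<Rightarrow> 'a update) \<Rightarrow> bool" where
  "valid_updates V ups \<longleftrightarrow> (\<forall>k e. ups k = Ins e \<longrightarrow> is_edge V e)"

definition is_matching :: "'a set set \<Rightarrow> 'a set set \<Rightarrow> bool" where
  "is_matching E M \<longleftrightarrow> M \<subseteq> E \<and> (\<forall>e1\<in>M. \<forall>e2\<in>M. e1 \<noteq> e2 \<longrightarrow> e1 \<inter> e2 = {})"

definition is_maximal_matching :: "'a set set \<Rightarrow> 'a set set \<Rightarrow> bool" where
  "is_maximal_matching E M \<longleftrightarrow> is_matching E M \<and> (\<forall>e\<in>E. \<not> (e \<inter> \<Union>M = {}))"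

definition is_vertex_cover :: "'a set \<Rightarrow> 'a set set \<Rightarrow> 'a set \<Rightarrow> bool" where
  "is_vertex_cover V E C \<longleftrightarrow> C \<subseteq> V \<and> (\<forall>e\<in>E. e \<inter> C \<noteq> {})"

definition min_vertex_cover_size :: "'a set \<Rightarrow> 'a set set \<Rightarrow> nat" where
  "min_vertex_cover_size V E = Min {card C | C. is_vertex_cover V E C}"

text \<open>V_cover(i \<rightarrow> j): add endpoints of edges inserted during updates i+1..j.\<close>
definition cover_extend :: "'a set \<Rightarrow> (nat \<Rightarrow> 'a update) \<Rightarrow> nat \<Rightarrow> nat \<Rightarrow> 'a set" where
  "cover_extend C ups i j = C \<union> \<Union>{e. \<exists>k. i < k \<and> k \<le> j \<and> ups k = Ins e}"

definition out_edges :: "'a set set \<Rightarrow> 'a set \<Rightarrow> 'a \<Rightarrow> 'a set set" where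
  "out_edges E V' u = {e \<in> E. u \<in> e \<and> \<not> e \<subseteq> V'}"

definition is_sparsifier :: "'a set set \<Rightarrow> 'a set \<Rightarrow> 'a set set \<Rightarrow> bool" where
  "is_sparsifier E V' G' \<longleftrightarrow>
     G' \<subseteq> E \<and>
     {e \<in> E. e \<subseteq> V'} \<subseteq> G' \<and>
     (\<forall>e\<in>G'. e \<subseteq> V' \<or> (\<exists>u\<in>V'. e \<in> out_edges E V' u)) \<and>
     (\<forall>u\<in>V'. card (out_edges G' V' u) = min (card V' + 1) (card (out_edges E V' u)))"

end

theory Submission
  imports Defs
begin

text \<open>
  Every edge of G(j) is either an edge of G(i), hence hit by the maximal matching M, or was
  inserted after step i; so V' = V_cover(i \<rightarrow> j) is a vertex cover of G(j).
  Let M' be a maximal matching of the sparsifier G'. An edge e of G(j) missed by \<Union>M' is not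
  in G', so it leaves V' at some u \<in> V' that M' leaves unmatched. Each edge of G' from u to
  the outside has its outer endpoint matched, and every edge of M' contains at most one vertex
  outside V'; hence u has at most |M'| \<le> |V'| out-edges in G'. By the sparsifier condition G'
  then keeps all out-edges of u, including e -- a contradiction. So \<Union>M' is a vertex cover,
  and as M' is a matching its 2|M'| vertices are at most twice any vertex cover.
\<close>

lemma card_2_eq_doubleton:
  assumes "card e = 2" "x \<in> e" "y \<in> e" "x \<noteq> y"
  shows "e = {x, y}"
proof -
  obtain a b where "e = {a, b}" using assms(1) by (auto simp: card_2_iff)
  then show ?thesis using assms(2-4) by auto
qed

lemma is_graph_edgeD:
  assumes "is_graph V E" "e \<in> E"
  shows "card e = 2" "e \<subseteq> V"
  using assms by (auto simp: is_graph_def is_edge_def)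

lemma finite_graph:
  assumes "is_graph V E" "finite V"
  shows "finite E"
proof -
  have "E \<subseteq> Pow V" using assms(1) by (auto dest: is_graph_edgeD)
  then show ?thesis using assms(2) finite_subset by blast
qed

lemma is_graph_subset: "is_graph V E \<Longrightarrow> E' \<subseteq> E \<Longrightarrow> is_graph V E'"
  by (auto simp: is_graph_def)

lemma Union_matching_subset: "is_graph V E \<Longrightarrow> is_matching E M \<Longrightarrow> \<Union>M \<subseteq> V"
  by (auto simp: is_matching_def dest: is_graph_edgeD)

lemma is_matching_disjoint:
  "is_matching E M \<Longrightarrow> f \<in> M \<Longrightarrow> f' \<in> M \<Longrightarrow> x \<in> f \<Longrightarrow> x \<in> f' \<Longrightarrow> f = f'"
  by (auto simp: is_matching_def)

lemma card_matching_le_card_hitting_set: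
  assumes "is_matching E M" "\<forall>e\<in>E. e \<inter> C \<noteq> {}" "finite C"
  shows "card M \<le> card C"
proof -
  define h where "h e = (SOME v. v \<in> e \<inter> C)" for e
  have h: "h e \<in> e \<inter> C" if "e \<in> M" for e
    using that assms(1,2) unfolding h_def is_matching_def by (metis ex_in_conv someI_ex subsetD)
  have "inj_on h M"
    by (rule inj_onI) (use h assms(1) in \<open>metis IntE is_matching_disjoint\<close>)
  moreover have "h ` M \<subseteq> C" using h by blast
  ultimately show ?thesis using assms(3) by (rule card_inj_on_le)
qed

lemma card_Union_matching:
  assumes "is_graph V E" "is_matching E M"
  shows "card (\<Union>M) = 2 * card M"
proof -
  have card_M: "card e = 2" if "e \<in> M" for e
    using that assms by (auto simp: is_matching_def dest: is_graph_edgeD)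
  have "pairwise disjnt M"
    using assms(2) by (auto simp: is_matching_def pairwise_def disjnt_def)
  then have "card (\<Union>M) = sum card M"
    by (rule card_Union_disjoint) (metis card_M card.infinite zero_neq_numeral)
  then show ?thesis using card_M by simp
qed

lemma card_Union_matching_le_twice_vertex_cover:
  assumes "finite V" "is_graph V E" "is_matching E M" "is_vertex_cover V E C"
  shows "card (\<Union>M) \<le> 2 * card C"
proof -
  have "finite C" using assms(1,4) finite_subset by (auto simp: is_vertex_cover_def)
  then have "card M \<le> card C"
    using assms(3,4) card_matching_le_card_hitting_set by (auto simp: is_vertex_cover_def)
  then show ?thesis using card_Union_matching[OF assms(2,3)] by simp
qed

lemma min_vertex_cover_size_attained:
  assumes "finite V" "is_vertex_cover V E V"
  obtains C where "is_vertex_cover V E C" "card C = min_vertex_cover_size V E"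
proof -
  define S where "S = {card C | C. is_vertex_cover V E C}"
  have "S \<subseteq> {..card V}"
    unfolding S_def using assms(1) by (auto simp: is_vertex_cover_def intro: card_mono)
  moreover have "card V \<in> S" using assms(2) unfolding S_def by blast
  ultimately have "Min S \<in> S" by (metis Min_in empty_iff finite_atMost finite_subset)
  then show ?thesis
    using that unfolding S_def min_vertex_cover_size_def by auto
qed

text \<open>Each edge of a matching has at most one endpoint outside a set meeting all edges.\<close>

lemma card_Union_matching_diff_le:
  assumes "is_graph V E" "finite V" "is_matching E M" "\<forall>e\<in>E. e \<inter> V' \<noteq> {}"
  shows "card (\<Union>M - V') \<le> card M"
proof -
  have M_E: "M \<subseteq> E" using assms(3) by (simp add: is_matching_def)
  have "card (e - V') \<le> 1" if "e \<in> M" for e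
  proof -
    have "card e = 2" using is_graph_edgeD(1)[OF assms(1)] that M_E by blast
    then obtain x y where "e = {x, y}" by (auto simp: card_2_iff)
    moreover have "e \<inter> V' \<noteq> {}" using assms(4) that M_E by blast
    ultimately have "e - V' \<subseteq> {x} \<or> e - V' \<subseteq> {y}" by blast
    then show ?thesis using card_mono[of "{x}" "e - V'"] card_mono[of "{y}" "e - V'"] by auto
  qed
  then have "(\<Sum>e\<in>M. card (e - V')) \<le> card M"
    using sum_mono[of M "\<lambda>e. card (e - V')" "\<lambda>_. 1"] by simp
  moreover have "finite M" using finite_graph[OF assms(1,2)] M_E finite_subset by blast
  then have "card (\<Union>e\<in>M. e - V') \<le> (\<Sum>e\<in>M. card (e - V'))" by (rule card_UN_le)
  moreover have "\<Union>M - V' = (\<Union>e\<in>M. e - V')" by blast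
  ultimately show ?thesis by (metis order_trans)
qed

text \<open>
  An unmatched vertex u \<in> V' has few out-edges: their outer endpoints are distinct, and all
  matched, since the maximal matching must hit these edges away from u.
\<close>

lemma card_out_edges_unmatched_le:
  assumes "is_graph V E" "finite V" "\<forall>e\<in>E. e \<inter> V' \<noteq> {}" "finite V'"
    and "is_maximal_matching E M" "u \<in> V'" "u \<notin> \<Union>M"
  shows "card (out_edges E V' u) \<le> card V'"
proof -
  have matching: "is_matching E M" using assms(5) by (simp add: is_maximal_matching_def)
  have "out_edges E V' u \<subseteq> (\<lambda>w. {u, w}) ` (\<Union>M - V')"
  proof
    fix e assume "e \<in> out_edges E V' u"
    then have e: "e \<in> E" "u \<in> e" "\<not> e \<subseteq> V'" by (auto simp: out_edges_def)
    then obtain w where w: "w \<in> e" "w \<notin> V'" by blast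
    have e_uw: "e = {u, w}"
      by (rule card_2_eq_doubleton[OF is_graph_edgeD(1)[OF assms(1) e(1)] e(2) w(1)])
        (use w(2) assms(6) in auto)
    moreover have "e \<inter> \<Union>M \<noteq> {}" using assms(5) e(1) by (simp add: is_maximal_matching_def)
    ultimately have "w \<in> \<Union>M" using assms(7) by auto
    then show "e \<in> (\<lambda>w. {u, w}) ` (\<Union>M - V')" using e_uw w(2) by auto
  qed
  moreover have "finite (\<Union>M - V')"
    using Union_matching_subset[OF assms(1) matching] assms(2) finite_subset by blast
  ultimately have "card (out_edges E V' u) \<le> card ((\<lambda>w. {u, w}) ` (\<Union>M - V'))"
    by (intro card_mono finite_imageI)
  also have "\<dots> \<le> card (\<Union>M - V')" by (rule card_image_le) fact
  also have "\<dots> \<le> card M" by (rule card_Union_matching_diff_le[OF assms(1,2) matching assms(3)])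
  also have "\<dots> \<le> card V'" by (rule card_matching_le_card_hitting_set[OF matching assms(3,4)])
  finally show ?thesis .
qed

lemma sparsifier_maximal_matching_hits:
  assumes "is_graph V E" "finite V" "V' \<subseteq> V" "\<forall>e\<in>E. e \<inter> V' \<noteq> {}"
    and "is_sparsifier E V' G'" "is_maximal_matching G' M'" "e \<in> E"
  shows "e \<inter> \<Union>M' \<noteq> {}"
proof (rule ccontr)
  assume missed: "\<not> e \<inter> \<Union>M' \<noteq> {}"
  have G'_E: "G' \<subseteq> E" using assms(5) by (simp add: is_sparsifier_def)
  have "e \<notin> G'" using assms(6) missed by (auto simp: is_maximal_matching_def)
  then have "\<not> e \<subseteq> V'" using assms(5,7) by (auto simp: is_sparsifier_def)
  obtain u where u: "u \<in> e" "u \<in> V'" using assms(4,7) by blast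
  have "finite V'" using assms(2,3) finite_subset by blast
  have "card (out_edges G' V' u) \<le> card V'"
    using card_out_edges_unmatched_le[OF is_graph_subset[OF assms(1) G'_E] assms(2) _ \<open>finite V'\<close>
        assms(6) u(2)] assms(4) G'_E missed u(1) by blast
  then have "card (out_edges G' V' u) = card (out_edges E V' u)"
    using assms(5) u(2) unfolding is_sparsifier_def by (simp add: min_def split: if_splits)
  moreover have "out_edges G' V' u \<subseteq> out_edges E V' u" using G'_E by (auto simp: out_edges_def)
  moreover have "finite (out_edges E V' u)"
    using finite_graph[OF assms(1,2)] by (simp add: out_edges_def)
  ultimately have "out_edges G' V' u = out_edges E V' u" by (simp add: card_subset_eq)
  then show False
    using \<open>e \<notin> G'\<close> \<open>\<not> e \<subseteq> V'\<close> assms(7) u(1) by (auto simp: out_edges_def)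
qed

lemma is_graph_graph_at:
  assumes "is_graph V G0" "valid_updates V ups"
  shows "is_graph V (graph_at G0 ups n)"
proof (induction n)
  case (Suc n)
  then show ?case
    using assms(2) by (cases "ups (Suc n)") (auto simp: is_graph_def valid_updates_def)
qed (use assms(1) in simp)

lemma graph_at_new_edge_inserted:
  assumes "e \<in> graph_at G0 ups j" "i \<le> j" "e \<notin> graph_at G0 ups i"
  shows "\<exists>k. i < k \<and> k \<le> j \<and> ups k = Ins e"
  using assms
proof (induction j)
  case (Suc j)
  show ?case
  proof (cases "i \<le> j \<and> e \<in> graph_at G0 ups j")
    case True
    then show ?thesis using Suc by (meson le_SucI)
  next
    case False
    with Suc.prems have "ups (Suc j) = Ins e" "i \<le> j"
      by (cases "ups (Suc j)"; auto simp: le_Suc_eq)+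
    then show ?thesis by (intro exI[of _ "Suc j"]) auto
  qed
qed simp

lemma cover_extend_subset:
  assumes "C \<subseteq> V" "valid_updates V ups"
  shows "cover_extend C ups i j \<subseteq> V"
  using assms unfolding cover_extend_def valid_updates_def is_edge_def by blast

lemma cover_extend_hits_graph_at:
  assumes "is_graph V G0" "valid_updates V ups" "is_maximal_matching (graph_at G0 ups i) M"
    and "i \<le> j" "e \<in> graph_at G0 ups j"
  shows "e \<inter> cover_extend (\<Union>M) ups i j \<noteq> {}"
proof (cases "e \<in> graph_at G0 ups i")
  case True
  then show ?thesis
    using assms(3) by (auto simp: is_maximal_matching_def cover_extend_def)
next
  case False
  then obtain k where "i < k" "k \<le> j" "ups k = Ins e"
    using graph_at_new_edge_inserted assms(4,5) by blast
  moreover have "e \<noteq> {}"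
    using is_graph_edgeD(1)[OF is_graph_graph_at[OF assms(1,2)] assms(5)] by auto
  ultimately show ?thesis by (auto simp: cover_extend_def)
qed

theorem lemma13:
  fixes V :: "'a set" and G0 :: "'a set set" and ups :: "nat \<Rightarrow> 'a update"
    and i j :: nat and M M' G' :: "'a set set"
  assumes "finite V"
    and "is_graph V G0"
    and "valid_updates V ups"
    and "is_maximal_matching (graph_at G0 ups i) M"
    and "i \<le> j"
    and "is_sparsifier (graph_at G0 ups j) (cover_extend (\<Union>M) ups i j) G'"
    and "is_maximal_matching G' M'"
  shows "is_vertex_cover V (graph_at G0 ups j) (\<Union>M')
       \<and> card (\<Union>M') \<le> 2 * min_vertex_cover_size V (graph_at G0 ups j)"
proof -
  define E where "E = graph_at G0 ups j"
  define V' where "V' = cover_extend (\<Union>M) ups i j"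
  have graph_E: "is_graph V E" unfolding E_def using is_graph_graph_at assms(2,3) .
  have "\<Union>M \<subseteq> V"
    by (rule Union_matching_subset[OF is_graph_graph_at[OF assms(2,3), of i]])
      (use assms(4) in \<open>simp add: is_maximal_matching_def\<close>)
  then have "V' \<subseteq> V" unfolding V'_def using cover_extend_subset assms(3) by blast
  have V'_hits: "\<forall>e\<in>E. e \<inter> V' \<noteq> {}"
    unfolding E_def V'_def using cover_extend_hits_graph_at assms(2-5) by blast
  have matching_E: "is_matching E M'"
    using assms(6,7) unfolding E_def
    by (auto simp: is_maximal_matching_def is_matching_def is_sparsifier_def)
  have cover: "is_vertex_cover V E (\<Union>M')"
    using sparsifier_maximal_matching_hits[OF graph_E assms(1) \<open>V' \<subseteq> V\<close> V'_hits]
      assms(6,7) Union_matching_subset[OF graph_E matching_E]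
    unfolding E_def V'_def is_vertex_cover_def by blast
  have "is_vertex_cover V E V" using V'_hits \<open>V' \<subseteq> V\<close> by (auto simp: is_vertex_cover_def)
  then obtain C where C: "is_vertex_cover V E C" "card C = min_vertex_cover_size V E"
    using assms(1) min_vertex_cover_size_attained by blast
  have "card (\<Union>M') \<le> 2 * card C"
    by (rule card_Union_matching_le_twice_vertex_cover[OF assms(1) graph_E matching_E C(1)])
  with cover show ?thesis using C(2) unfolding E_def by simp
qed

end
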